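(* Let $S$ be a simple extension of degree $n$ of a field $k$ of characteristic $0$, let $c$ be a primitive element of $S/k$, and let $x\in S$ be non-zero. Let $V_c=\{b\in S^*\mid cb^2\text{ is a primitive element of }S/k\}$. Then the set $W_{c,x}=\{b\in V_c\mid \{xb^{-1},cb^2\}\neq 0\}$ is non-empty and open in $S^*$.
   Context: A $k$-algebra $S$ is a simple extension of degree $n$ of the field $k$ if there is $c\in S^*$ (a primitive element) such that $1,c,\dots,c^{n-1}$ is a $k$-basis of $S$. For a primitive element $d$ and $y\in S$, $\{y,d\}$ denotes the coefficient $y_{n-1}$ in the unique expression $y=\sum_{i=0}^{n-1}y_i d^i$ with $y_i\in k$. $S$ is identified with $\mathbb{A}^n(k)$ via a $k$-basis and given the Zariski topology; $S^*$ carries the subspace topology. *)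

theory Defs
  imports Main
begin

text \<open>A k-algebra S is modelled by a commutative ring type 'b together with a ring
homomorphism iota from the field k (type 'a) into S (the structure map).\<close>

definition alg_hom :: "('a::field \<Rightarrow> 'b::comm_ring_1) \<Rightarrow> bool" where
  "alg_hom iota \<longleftrightarrow> iota 1 = 1 \<and> (\<forall>a b. iota (a + b) = iota a + iota b)
                  \<and> (\<forall>a b. iota (a * b) = iota a * iota b)"

definition prim_elem :: "('a::field \<Rightarrow> 'b::comm_ring_1) \<Rightarrow> nat \<Rightarrow> 'b \<Rightarrow> bool" where
  "prim_elem iota n d \<longleftrightarrow> d dvd 1 \<and>
     (\<forall>y. \<exists>!a. (\<forall>i\<ge>n. a i = 0) \<and> y = (\<Sum>i<n. iota (a i) * d ^ i))"

definition coords :: "('a::field \<Rightarrow> 'b::comm_ring_1) \<Rightarrow> nat \<Rightarrow> 'b \<Rightarrow> 'b \<Rightarrow> (nat \<Rightarrow> 'a)" where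
  "coords iota n d y = (THE a. (\<forall>i\<ge>n. a i = 0) \<and> y = (\<Sum>i<n. iota (a i) * d ^ i))"

definition bracket :: "('a::field \<Rightarrow> 'b::comm_ring_1) \<Rightarrow> nat \<Rightarrow> 'b \<Rightarrow> 'b \<Rightarrow> 'a" where
  "bracket iota n y d = coords iota n d y (n - 1)"

definition inv_S :: "'b::comm_ring_1 \<Rightarrow> 'b" where
  "inv_S b = (SOME u. b * u = 1)"

inductive_set kpolys :: "((nat \<Rightarrow> 'a::field) \<Rightarrow> 'a) set" where
  const: "(\<lambda>v. c) \<in> kpolys"
| proj: "(\<lambda>v. v i) \<in> kpolys"
| add: "p \<in> kpolys \<Longrightarrow> q \<in> kpolys \<Longrightarrow> (\<lambda>v. p v + q v) \<in> kpolys"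
| mult: "p \<in> kpolys \<Longrightarrow> q \<in> kpolys \<Longrightarrow> (\<lambda>v. p v * q v) \<in> kpolys"

text \<open>Zariski open subsets of S, identifying S with A^n(k) via the basis
1, c, ..., c^(n-1) for a primitive element c.\<close>

definition zariski_open :: "('a::field \<Rightarrow> 'b::comm_ring_1) \<Rightarrow> nat \<Rightarrow> 'b \<Rightarrow> 'b set \<Rightarrow> bool" where
  "zariski_open iota n c U \<longleftrightarrow>
     (\<exists>P \<subseteq> kpolys. U = - {y. \<forall>p\<in>P. p (coords iota n c y) = 0})"

definition units_open :: "('a::field \<Rightarrow> 'b::comm_ring_1) \<Rightarrow> nat \<Rightarrow> 'b \<Rightarrow> 'b set \<Rightarrow> bool" where
  "units_open iota n c U \<longleftrightarrow>
     (\<exists>Z. zariski_open iota n c Z \<and> U = Z \<inter> {u. u dvd 1})"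

end

theory Submission
  imports Defs "Jordan_Normal_Form.Determinant" "HOL-Computational_Algebra.Polynomial"
begin

(* Put d = c b^2. For a unit b, d is primitive iff the elements d^i b = c^i b^(2i+1), i < n, form
   a basis of S, i.e. iff the determinant D(b) of their coordinate matrix is nonzero; and then, by
   Cramer's rule, {x b^-1, d} D(b) = D_x(b), the determinant obtained by replacing the last column
   by the coordinates of x. Both determinants are polynomials in the coordinates of b, so
   W = {b unit. D(b) D_x(b) \<noteq> 0} is open.
   If the top coordinate of x is nonzero, b = 1 lies in W. Otherwise let x_m be the top nonzero
   coordinate and restrict to the line b = 1 + s c^(n-1-m): there D_x is s times a polynomial in s
   whose value at s = 0 is -(2m+1) x_m \<noteq> 0 (characteristic 0), and D is a polynomial with value 1
   at s = 0, so all but finitely many s give a point of W. *)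

definition fun_algebra :: "('x \<Rightarrow> 'a::comm_ring_1) set \<Rightarrow> bool" where
  "fun_algebra R \<longleftrightarrow> (\<forall>a. (\<lambda>_. a) \<in> R) \<and> (\<forall>f\<in>R. \<forall>g\<in>R. (\<lambda>x. f x + g x) \<in> R)
     \<and> (\<forall>f\<in>R. \<forall>g\<in>R. (\<lambda>x. f x * g x) \<in> R)"

lemma fun_algebra_const: "fun_algebra R \<Longrightarrow> (\<lambda>_. a) \<in> R"
  unfolding fun_algebra_def by blast

lemma fun_algebra_add: "fun_algebra R \<Longrightarrow> f \<in> R \<Longrightarrow> g \<in> R \<Longrightarrow> (\<lambda>x. f x + g x) \<in> R"
  unfolding fun_algebra_def by blast

lemma fun_algebra_mult: "fun_algebra R \<Longrightarrow> f \<in> R \<Longrightarrow> g \<in> R \<Longrightarrow> (\<lambda>x. f x * g x) \<in> R"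
  unfolding fun_algebra_def by blast

lemma fun_algebra_sum:
  assumes R: "fun_algebra R" and "finite I" and "\<And>i. i \<in> I \<Longrightarrow> (\<lambda>x. f i x) \<in> R"
  shows "(\<lambda>x. \<Sum>i\<in>I. f i x) \<in> R"
  using assms(2,3)
proof (induction I rule: finite_induct)
  case empty
  then show ?case using fun_algebra_const[OF R, of 0] by simp
next
  case (insert a F)
  have "(\<lambda>x. f a x + (\<Sum>i\<in>F. f i x)) \<in> R"
    using insert by (intro fun_algebra_add[OF R]) auto
  then show ?case using insert by simp
qed

lemma fun_algebra_prod:
  assumes R: "fun_algebra R" and "finite I" and "\<And>i. i \<in> I \<Longrightarrow> (\<lambda>x. f i x) \<in> R"
  shows "(\<lambda>x. \<Prod>i\<in>I. f i x) \<in> R"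
  using assms(2,3)
proof (induction I rule: finite_induct)
  case empty
  then show ?case using fun_algebra_const[OF R, of 1] by simp
next
  case (insert a F)
  have "(\<lambda>x. f a x * (\<Prod>i\<in>F. f i x)) \<in> R"
    using insert by (intro fun_algebra_mult[OF R]) auto
  then show ?case using insert by simp
qed

lemma fun_algebra_det:
  assumes R: "fun_algebra R" and F: "\<And>i j. i < n \<Longrightarrow> j < n \<Longrightarrow> (\<lambda>x. F x i j) \<in> R"
  shows "(\<lambda>x. det (mat n n (\<lambda>(i, j). F x i j))) \<in> R"
proof -
  have leibniz: "det (mat n n (\<lambda>(i, j). F x i j)) =
      (\<Sum>p\<in>{p. p permutes {0..<n}}. of_int (sign p) * (\<Prod>i = 0..<n. F x i (p i)))" for x
    by (subst det_def'[of _ n]) (auto intro!: sum.cong prod.cong dest: permutes_in_image)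
  show ?thesis
    unfolding leibniz using F permutes_in_image
    by (intro fun_algebra_sum[OF R] fun_algebra_mult[OF R] fun_algebra_const[OF R]
        fun_algebra_prod[OF R]) (auto simp: finite_permutations)
qed

lemma mat_solutions_unique_iff_det_nonzero:
  fixes A :: "'a::field mat"
  assumes A: "A \<in> carrier_mat n n"
  shows "(\<forall>t\<in>carrier_vec n. \<exists>!v. v \<in> carrier_vec n \<and> A *\<^sub>v v = t) \<longleftrightarrow> det A \<noteq> 0"
proof
  assume unique: "\<forall>t\<in>carrier_vec n. \<exists>!v. v \<in> carrier_vec n \<and> A *\<^sub>v v = t"
  show "det A \<noteq> 0"
  proof
    assume "det A = 0"
    then obtain v where "v \<in> carrier_vec n" "v \<noteq> 0\<^sub>v n" "A *\<^sub>v v = 0\<^sub>v n"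
      using det_0_iff_vec_prod_zero_field[OF A] by blast
    moreover have "A *\<^sub>v 0\<^sub>v n = 0\<^sub>v n" using A by (auto intro!: eq_vecI)
    ultimately show False using unique zero_carrier_vec by metis
  qed
next
  assume "det A \<noteq> 0"
  from det_non_zero_imp_unit[OF A this, of "()"]
  obtain B where B: "B \<in> carrier_mat n n" "B * A = 1\<^sub>m n" "A * B = 1\<^sub>m n"
    unfolding Units_def ring_mat_def by auto
  show "\<forall>t\<in>carrier_vec n. \<exists>!v. v \<in> carrier_vec n \<and> A *\<^sub>v v = t"
  proof
    fix t :: "'a vec" assume t: "t \<in> carrier_vec n"
    show "\<exists>!v. v \<in> carrier_vec n \<and> A *\<^sub>v v = t"
    proof (rule ex1I[of _ "B *\<^sub>v t"])
      show "B *\<^sub>v t \<in> carrier_vec n \<and> A *\<^sub>v (B *\<^sub>v t) = t"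
        using A B t by (simp add: assoc_mult_mat_vec[symmetric])
    next
      fix v assume "v \<in> carrier_vec n \<and> A *\<^sub>v v = t"
      then show "v = B *\<^sub>v t" using A B by (auto simp: assoc_mult_mat_vec[symmetric])
    qed
  qed
qed

definition binom_tail :: "'a::comm_ring_1 \<Rightarrow> 'a \<Rightarrow> nat \<Rightarrow> 'a" where
  "binom_tail t z m = (\<Sum>k\<le>m. of_nat (Suc m choose Suc k) * t ^ k * z ^ Suc k)"

lemma one_plus_mult_power_eq: "(1 + t * z) ^ Suc m = 1 + t * binom_tail t z m"
proof -
  have "(1 + t * z) ^ Suc m = (t * z + 1) ^ Suc m" by (simp add: add.commute)
  also have "\<dots> = (\<Sum>k\<le>Suc m. of_nat (Suc m choose k) * (t * z) ^ k * 1 ^ (Suc m - k))"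
    by (rule binomial_ring)
  also have "\<dots> = 1 + (\<Sum>k\<le>m. of_nat (Suc m choose Suc k) * (t * z) ^ Suc k)"
    by (subst sum.atMost_Suc_shift) simp
  finally show ?thesis
    by (simp add: binom_tail_def sum_distrib_left power_mult_distrib mult_ac)
qed

lemma binom_tail_zero: "binom_tail 0 z m = of_nat (Suc m) * z"
proof -
  have "binom_tail 0 z m = (\<Sum>k\<le>m. if k = 0 then of_nat (Suc m) * z else 0)"
    unfolding binom_tail_def by (intro sum.cong) (auto simp: power_0_left)
  then show ?thesis by simp
qed

lemma fun_algebra_poly: "fun_algebra (range poly)"
  unfolding fun_algebra_def
proof (intro conjI ballI allI)
  fix a :: 'a
  show "(\<lambda>_. a) \<in> range poly" by (auto intro!: range_eqI[of _ _ "[:a:]"])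
next
  fix f g :: "'a \<Rightarrow> 'a" assume "f \<in> range poly" "g \<in> range poly"
  then obtain p q where "f = poly p" "g = poly q" by auto
  have "(\<lambda>x. poly p x + poly q x) = poly (p + q)" "(\<lambda>x. poly p x * poly q x) = poly (p * q)"
    by auto
  then show "(\<lambda>x. f x + g x) \<in> range poly" "(\<lambda>x. f x * g x) \<in> range poly"
    using \<open>f = poly p\<close> \<open>g = poly q\<close> by (metis rangeI)+
qed

lemma poly_funs_common_nonzero:
  fixes f g :: "'a::idom \<Rightarrow> 'a"
  assumes "infinite (UNIV :: 'a set)" and "f \<in> range poly" "g \<in> range poly"
    and "f a \<noteq> 0" "g b \<noteq> 0"
  shows "\<exists>s. s \<noteq> 0 \<and> f s \<noteq> 0 \<and> g s \<noteq> 0"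
proof -
  obtain p q where pq: "f = poly p" "g = poly q" using assms(2,3) by auto
  then have "p * q \<noteq> 0" using assms(4,5) by auto
  then have "finite ({s. poly (p * q) s = 0} \<union> {0})" by (simp add: poly_roots_finite)
  then obtain s where "s \<notin> {s. poly (p * q) s = 0} \<union> {0}"
    using ex_new_if_finite[OF assms(1)] by blast
  then show ?thesis using pq by auto
qed

locale simple_ext =
  fixes iota :: "'a::field \<Rightarrow> 'b::comm_ring_1" and n :: nat and c :: 'b
  assumes alg_hom: "alg_hom iota" and prim: "prim_elem iota n c"
begin

lemma iota_add: "iota (a + b) = iota a + iota b"
  using alg_hom unfolding alg_hom_def by blast

lemma iota_mult: "iota (a * b) = iota a * iota b"
  using alg_hom unfolding alg_hom_def by blast

lemma iota_one: "iota 1 = 1"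
  using alg_hom unfolding alg_hom_def by blast

lemma iota_zero: "iota 0 = 0"
  using iota_add[of 0 0] by simp

lemma iota_minus: "iota (- a) = - iota a"
  using iota_add[of a "- a"] iota_zero by (simp add: eq_neg_iff_add_eq_0 add.commute)

lemma iota_of_nat: "iota (of_nat k) = of_nat k"
  by (induction k) (auto simp: iota_zero iota_one iota_add)

abbreviation coord :: "'b \<Rightarrow> nat \<Rightarrow> 'a" where
  "coord \<equiv> coords iota n c"

definition lincomb :: "(nat \<Rightarrow> 'b) \<Rightarrow> (nat \<Rightarrow> 'a) \<Rightarrow> 'b" where
  "lincomb w a = (\<Sum>i<n. iota (a i) * w i)"

definition is_basis :: "(nat \<Rightarrow> 'b) \<Rightarrow> bool" where
  "is_basis w \<longleftrightarrow> (\<forall>y. \<exists>!a. (\<forall>i\<ge>n. a i = 0) \<and> y = lincomb w a)"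

definition coord_mat :: "(nat \<Rightarrow> 'b) \<Rightarrow> 'a mat" where
  "coord_mat w = mat n n (\<lambda>(j, i). coord (w i) j)"

lemma prim_elem_iff_is_basis: "prim_elem iota n d \<longleftrightarrow> d dvd 1 \<and> is_basis (\<lambda>i. d ^ i)"
  unfolding prim_elem_def is_basis_def lincomb_def ..

lemma c_unit: "c dvd 1"
  using prim unfolding prim_elem_def by blast

lemma coord_spec: "(\<forall>i\<ge>n. coord y i = 0) \<and> y = (\<Sum>i<n. iota (coord y i) * c ^ i)"
proof -
  have "\<exists>!a. (\<forall>i\<ge>n. a i = 0) \<and> y = (\<Sum>i<n. iota (a i) * c ^ i)"
    using prim unfolding prim_elem_def by blast
  then show ?thesis unfolding coords_def by (rule theI')
qed

lemma coord_eq_0: "i \<ge> n \<Longrightarrow> coord y i = 0"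
  using coord_spec by blast

lemma coord_expand: "y = (\<Sum>i<n. iota (coord y i) * c ^ i)"
  using coord_spec by blast

lemma lincomb_powers_coord: "lincomb (\<lambda>i. c ^ i) (coord y) = y"
  unfolding lincomb_def by (rule coord_expand[symmetric])

lemma coord_unique:
  assumes "\<And>i. i \<ge> n \<Longrightarrow> a i = 0" and "y = (\<Sum>i<n. iota (a i) * c ^ i)"
  shows "coord y = a"
proof -
  have "\<exists>!a. (\<forall>i\<ge>n. a i = 0) \<and> y = (\<Sum>i<n. iota (a i) * c ^ i)"
    using prim unfolding prim_elem_def by blast
  then show ?thesis using coord_spec[of y] assms by blast
qed

lemma coord_inj: "coord y = coord z \<Longrightarrow> y = z"
  using coord_expand[of y] coord_expand[of z] by simp

lemma coord_add: "coord (y + z) = (\<lambda>i. coord y i + coord z i)"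
proof (rule coord_unique)
  show "y + z = (\<Sum>i<n. iota (coord y i + coord z i) * c ^ i)"
    by (subst coord_expand[of y], subst coord_expand[of z]) (simp add: iota_add sum.distrib distrib_right)
qed (simp add: coord_eq_0)

lemma coord_smult: "coord (iota a * y) = (\<lambda>i. a * coord y i)"
proof (rule coord_unique)
  show "iota a * y = (\<Sum>i<n. iota (a * coord y i) * c ^ i)"
    by (subst coord_expand[of y]) (simp add: iota_mult sum_distrib_left mult.assoc)
qed (simp add: coord_eq_0)

lemma coord_zero: "coord 0 = (\<lambda>i. 0)"
  by (rule coord_unique) (auto simp: iota_zero)

lemma coord_sum: "coord (\<Sum>k\<in>I. f k) = (\<lambda>i. \<Sum>k\<in>I. coord (f k) i)"
  by (induction I rule: infinite_finite_induct) (auto simp: coord_zero coord_add)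

lemma coord_uminus: "coord (- y) = (\<lambda>i. - coord y i)"
  using coord_smult[of "- 1" y] by (simp add: iota_minus iota_one)

lemma coord_power_c:
  assumes "e < n" shows "coord (c ^ e) = (\<lambda>i. if i = e then 1 else 0)"
proof (rule coord_unique)
  have "(\<Sum>i<n. iota (if i = e then 1 else 0) * c ^ i) = (\<Sum>i<n. if i = e then c ^ e else 0)"
    by (rule sum.cong) (auto simp: iota_one iota_zero)
  then show "c ^ e = (\<Sum>i<n. iota (if i = e then 1 else 0) * c ^ i)" using assms by simp
qed (use assms in auto)

lemma coord_mult:
  "coord (y * z) j = (\<Sum>i1<n. \<Sum>i2<n. coord y i1 * coord z i2 * coord (c ^ (i1 + i2)) j)"
proof -
  have "y * z = (\<Sum>i1<n. \<Sum>i2<n. iota (coord y i1 * coord z i2) * c ^ (i1 + i2))"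
    by (subst coord_expand[of y], subst coord_expand[of z]) (simp add: sum_product iota_mult power_add mult_ac)
  then show ?thesis by (simp add: coord_sum coord_smult)
qed

lemma coord_mult_power_c_top:
  assumes "m < n" and top: "\<And>i. coord y i \<noteq> 0 \<Longrightarrow> i \<le> m"
  shows "coord (y * c ^ (n - 1 - m)) (n - 1) = coord y m"
proof -
  have "y * c ^ (n - 1 - m) = (\<Sum>i<n. iota (coord y i) * c ^ (i + (n - 1 - m)))"
    by (subst coord_expand[of y]) (simp add: sum_distrib_right power_add mult.assoc)
  then have "coord (y * c ^ (n - 1 - m)) (n - 1)
      = (\<Sum>i<n. coord y i * coord (c ^ (i + (n - 1 - m))) (n - 1))"
    by (simp add: coord_sum coord_smult)
  also have "\<dots> = (\<Sum>i<n. if i = m then coord y m else 0)"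
  proof (rule sum.cong[OF refl])
    fix i
    show "coord y i * coord (c ^ (i + (n - 1 - m))) (n - 1) = (if i = m then coord y m else 0)"
      using top[of i] \<open>m < n\<close> by (cases "coord y i = 0") (auto simp: coord_power_c)
  qed
  finally show ?thesis using \<open>m < n\<close> by simp
qed

lemma coord_lincomb: "coord (lincomb w a) j = (\<Sum>i<n. a i * coord (w i) j)"
  unfolding lincomb_def by (simp add: coord_sum coord_smult)

lemma coord_mat_carrier: "coord_mat w \<in> carrier_mat n n"
  unfolding coord_mat_def by simp

lemma coord_mat_mult_vec: "coord_mat w *\<^sub>v vec n a = vec n (coord (lincomb w a))"
  by (rule eq_vecI)
    (auto simp: coord_mat_def coord_lincomb scalar_prod_def mult.commute intro!: sum.cong)

lemma coord_mat_powers_c: "coord_mat (\<lambda>i. c ^ i) = 1\<^sub>m n"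
  by (rule eq_matI) (auto simp: coord_mat_def coord_power_c)

lemma vec_coord_eq_iff: "vec n (coord y) = vec n (coord z) \<longleftrightarrow> y = z"
proof
  assume eq: "vec n (coord y) = vec n (coord z)"
  have "coord y i = coord z i" for i
    using arg_cong[OF eq, of "\<lambda>v. v $ i"] by (cases "i < n") (auto simp: coord_eq_0)
  then show "y = z" by (intro coord_inj ext)
qed simp

lemma lincomb_eq_iff_coord_mat: "y = lincomb w a \<longleftrightarrow> coord_mat w *\<^sub>v vec n a = vec n (coord y)"
  by (auto simp: coord_mat_mult_vec vec_coord_eq_iff)

lemma is_basis_iff_unique_solutions:
  "is_basis w \<longleftrightarrow> (\<forall>t\<in>carrier_vec n. \<exists>!v. v \<in> carrier_vec n \<and> coord_mat w *\<^sub>v v = t)"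
proof
  assume basis: "is_basis w"
  show "\<forall>t\<in>carrier_vec n. \<exists>!v. v \<in> carrier_vec n \<and> coord_mat w *\<^sub>v v = t"
  proof
    fix t :: "'a vec" assume t: "t \<in> carrier_vec n"
    define y where "y = lincomb (\<lambda>i. c ^ i) (\<lambda>i. if i < n then t $ i else 0)"
    have ty: "t = vec n (coord y)"
      using t unfolding y_def lincomb_def by (subst coord_unique[of "\<lambda>i. if i < n then t $ i else 0"]) (auto intro!: eq_vecI)
    obtain a where a: "\<forall>i\<ge>n. a i = 0" "y = lincomb w a"
      and a_unique: "\<And>a'. \<forall>i\<ge>n. a' i = 0 \<Longrightarrow> y = lincomb w a' \<Longrightarrow> a' = a"
      using basis unfolding is_basis_def by metis
    show "\<exists>!v. v \<in> carrier_vec n \<and> coord_mat w *\<^sub>v v = t"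
    proof (rule ex1I[of _ "vec n a"])
      show "vec n a \<in> carrier_vec n \<and> coord_mat w *\<^sub>v vec n a = t"
        using a(2) ty lincomb_eq_iff_coord_mat by simp
    next
      fix v assume v: "v \<in> carrier_vec n \<and> coord_mat w *\<^sub>v v = t"
      define a' where "a' = (\<lambda>i. if i < n then v $ i else 0)"
      have "vec n a' = v" using v unfolding a'_def by (auto intro!: eq_vecI)
      then have "y = lincomb w a'" using v ty lincomb_eq_iff_coord_mat by simp
      then have "a' = a" by (intro a_unique) (auto simp: a'_def)
      then show "v = vec n a" using \<open>vec n a' = v\<close> by simp
    qed
  qed
next
  assume unique: "\<forall>t\<in>carrier_vec n. \<exists>!v. v \<in> carrier_vec n \<and> coord_mat w *\<^sub>v v = t"
  show "is_basis w" unfolding is_basis_def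
  proof
    fix y
    obtain v where v: "v \<in> carrier_vec n" "coord_mat w *\<^sub>v v = vec n (coord y)"
      and v_unique: "\<And>v'. v' \<in> carrier_vec n \<Longrightarrow> coord_mat w *\<^sub>v v' = vec n (coord y) \<Longrightarrow> v' = v"
      using unique[rule_format, of "vec n (coord y)"] by auto
    define a where "a = (\<lambda>i. if i < n then v $ i else 0)"
    have va: "vec n a = v" using v(1) unfolding a_def by (auto intro!: eq_vecI)
    show "\<exists>!a. (\<forall>i\<ge>n. a i = 0) \<and> y = lincomb w a"
    proof (rule ex1I[of _ a])
      show "(\<forall>i\<ge>n. a i = 0) \<and> y = lincomb w a"
        using v(2) va lincomb_eq_iff_coord_mat by (simp add: a_def)
    next
      fix a' assume a': "(\<forall>i\<ge>n. a' i = 0) \<and> y = lincomb w a'"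
      then have "vec n a' = v" using v_unique lincomb_eq_iff_coord_mat by simp
      then show "a' = a" using a' unfolding a_def by (auto intro!: ext)
    qed
  qed
qed

lemma is_basis_iff_det: "is_basis w \<longleftrightarrow> det (coord_mat w) \<noteq> 0"
  using is_basis_iff_unique_solutions mat_solutions_unique_iff_det_nonzero[OF coord_mat_carrier]
  by simp

lemma is_basis_mult_unit:
  assumes "is_basis w" and "b * b' = 1"
  shows "is_basis (\<lambda>i. w i * b)"
  unfolding is_basis_def
proof
  fix y
  have lincomb_mult: "lincomb (\<lambda>i. w i * b) a = lincomb w a * b" for a
    unfolding lincomb_def by (simp add: sum_distrib_right mult.assoc)
  have "y = lincomb w a * b \<longleftrightarrow> y * b' = lincomb w a" for a
    using \<open>b * b' = 1\<close> by (metis mult.assoc mult.commute mult_1_right)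
  moreover have "\<exists>!a. (\<forall>i\<ge>n. a i = 0) \<and> y * b' = lincomb w a"
    using \<open>is_basis w\<close> unfolding is_basis_def by blast
  ultimately show "\<exists>!a. (\<forall>i\<ge>n. a i = 0) \<and> y = lincomb (\<lambda>i. w i * b) a"
    unfolding lincomb_mult by simp
qed

lemma det_coord_mat_replace_lincomb:
  assumes "k < n"
  shows "det (coord_mat (w(k := lincomb w a))) = a k * det (coord_mat w)"
proof -
  have "coord_mat (w(k := lincomb w a)) = replace_col (coord_mat w) (coord_mat w *\<^sub>v vec n a) k"
    unfolding coord_mat_mult_vec by (rule eq_matI) (auto simp: replace_col_def coord_mat_def)
  also have "det \<dots> = vec n a $ k * det (coord_mat w)"
    by (rule cramer_lemma_mat[OF coord_mat_carrier _ assms]) simp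
  finally show ?thesis using assms by simp
qed

definition coord_polys :: "('b \<Rightarrow> 'a) set" where
  "coord_polys = {g. \<exists>p\<in>kpolys. g = (\<lambda>y. p (coord y))}"

lemma fun_algebra_coord_polys: "fun_algebra coord_polys"
  unfolding fun_algebra_def
proof (intro conjI ballI allI)
  fix a :: 'a
  show "(\<lambda>_. a) \<in> coord_polys" using kpolys.const[of a] by (auto simp: coord_polys_def)
next
  fix f g assume "f \<in> coord_polys" "g \<in> coord_polys"
  then obtain p q where "p \<in> kpolys" "q \<in> kpolys" "f = (\<lambda>y. p (coord y))" "g = (\<lambda>y. q (coord y))"
    by (auto simp: coord_polys_def)
  then show "(\<lambda>x. f x + g x) \<in> coord_polys" "(\<lambda>x. f x * g x) \<in> coord_polys"
    using kpolys.add[of p q] kpolys.mult[of p q] by (auto simp: coord_polys_def)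
qed

lemma zariski_open_nonvanishing:
  assumes "f \<in> coord_polys"
  shows "zariski_open iota n c {y. f y \<noteq> 0}"
proof -
  obtain p where "p \<in> kpolys" and "f = (\<lambda>y. p (coord y))"
    using assms unfolding coord_polys_def by blast
  then have "{p} \<subseteq> kpolys" and "{y. f y \<noteq> 0} = - {y. \<forall>q\<in>{p}. q (coord y) = 0}" by auto
  then show ?thesis unfolding zariski_open_def by blast
qed

definition coords_in :: "('x \<Rightarrow> 'a) set \<Rightarrow> ('x \<Rightarrow> 'b) \<Rightarrow> bool" where
  "coords_in R F \<longleftrightarrow> (\<forall>j. (\<lambda>x. coord (F x) j) \<in> R)"

lemma coords_in_const: "fun_algebra R \<Longrightarrow> coords_in R (\<lambda>_. y)"
  unfolding coords_in_def by (auto intro: fun_algebra_const)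

lemma coords_in_add: "fun_algebra R \<Longrightarrow> coords_in R F \<Longrightarrow> coords_in R G \<Longrightarrow> coords_in R (\<lambda>x. F x + G x)"
  unfolding coords_in_def by (auto simp: coord_add intro: fun_algebra_add)

lemma coords_in_mult:
  assumes R: "fun_algebra R" and "coords_in R F" "coords_in R G"
  shows "coords_in R (\<lambda>x. F x * G x)"
  using assms(2,3) unfolding coords_in_def coord_mult
  by (intro allI fun_algebra_sum[OF R] fun_algebra_mult[OF R] fun_algebra_const[OF R]) auto

lemma coords_in_power:
  assumes R: "fun_algebra R" and F: "coords_in R F"
  shows "coords_in R (\<lambda>x. F x ^ k)"
proof (induction k)
  case 0
  then show ?case using coords_in_const[OF R, of 1] by simp
next
  case (Suc k)
  then show ?case using coords_in_mult[OF R F Suc] by simp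
qed

lemma coords_in_sum:
  assumes R: "fun_algebra R" and "finite I" and "\<And>i. i \<in> I \<Longrightarrow> coords_in R (F i)"
  shows "coords_in R (\<lambda>x. \<Sum>i\<in>I. F i x)"
  using assms(2,3) unfolding coords_in_def coord_sum by (auto intro!: fun_algebra_sum[OF R])

lemma coords_in_uminus:
  assumes R: "fun_algebra R" and "coords_in R F"
  shows "coords_in R (\<lambda>x. - F x)"
proof -
  have "(\<lambda>x. (- 1) * coord (F x) j) \<in> R" for j
    using assms(2) unfolding coords_in_def by (intro fun_algebra_mult[OF R] fun_algebra_const[OF R]) auto
  then show ?thesis unfolding coords_in_def coord_uminus by simp
qed

lemma coords_in_coord_polys_id: "coords_in coord_polys (\<lambda>y. y)"
  unfolding coords_in_def coord_polys_def using kpolys.proj by fastforce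

lemma coords_in_poly_iota: "coords_in (range poly) iota"
proof -
  have "(\<lambda>s. coord (iota s) j) = poly [:0, coord 1 j:]" for j
    using coord_smult[of _ 1] by (auto simp: mult.commute)
  then show ?thesis unfolding coords_in_def by auto
qed

lemma det_coord_mat_in:
  assumes "fun_algebra R" and "\<And>i. i < n \<Longrightarrow> coords_in R (\<lambda>x. W x i)"
  shows "(\<lambda>x. det (coord_mat (W x))) \<in> R"
  using assms unfolding coord_mat_def coords_in_def by (intro fun_algebra_det) auto

definition scaled_powers :: "'b \<Rightarrow> nat \<Rightarrow> 'b" where
  "scaled_powers b i = c ^ i * b ^ (2 * i + 1)"

definition basis_det :: "'b \<Rightarrow> 'a" where
  "basis_det b = det (coord_mat (scaled_powers b))"

definition cramer_det :: "'b \<Rightarrow> 'b \<Rightarrow> 'a" where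
  "cramer_det x b = det (coord_mat ((scaled_powers b)(n - 1 := x)))"

lemma powers_mult_eq_scaled_powers: "(\<lambda>i. (c * b ^ 2) ^ i * b) = scaled_powers b"
  unfolding scaled_powers_def by (auto simp: power_mult_distrib power_mult[symmetric] mult.assoc)

lemma unit_if_basis_det_nonzero:
  assumes "basis_det b \<noteq> 0"
  shows "b dvd 1"
proof -
  have "is_basis (scaled_powers b)" using assms is_basis_iff_det basis_det_def by simp
  then obtain a where "1 = lincomb (scaled_powers b) a" unfolding is_basis_def by blast
  also have "\<dots> = b * (\<Sum>i<n. iota (a i) * c ^ i * b ^ (2 * i))"
    unfolding lincomb_def scaled_powers_def by (simp add: sum_distrib_left mult_ac)
  finally show ?thesis by (rule dvdI)
qed

lemma prim_elem_iff_basis_det: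
  assumes "b * b' = 1"
  shows "prim_elem iota n (c * b ^ 2) \<longleftrightarrow> basis_det b \<noteq> 0"
proof -
  have "c * b ^ 2 dvd 1" using c_unit assms by (simp add: power2_eq_square dvdI mult.commute)
  moreover have "is_basis (\<lambda>i. (c * b ^ 2) ^ i) \<longleftrightarrow> is_basis (\<lambda>i. (c * b ^ 2) ^ i * b)"
  proof
    assume "is_basis (\<lambda>i. (c * b ^ 2) ^ i * b)"
    moreover have "b' * b = 1" using assms by (simp add: mult.commute)
    ultimately have "is_basis (\<lambda>i. (c * b ^ 2) ^ i * b * b')" by (rule is_basis_mult_unit)
    then show "is_basis (\<lambda>i. (c * b ^ 2) ^ i)" using assms by (simp add: mult.assoc)
  qed (rule is_basis_mult_unit[OF _ assms])
  ultimately show ?thesis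
    unfolding prim_elem_iff_is_basis basis_det_def is_basis_iff_det[symmetric]
      powers_mult_eq_scaled_powers by blast
qed

lemma bracket_mult_basis_det:
  assumes "n > 0" and "b * b' = 1" and prim_d: "prim_elem iota n (c * b ^ 2)"
  shows "bracket iota n (x * inv_S b) (c * b ^ 2) * basis_det b = cramer_det x b"
proof -
  define d where "d = c * b ^ 2"
  define a where "a = coords iota n d (x * inv_S b)"
  have "b * inv_S b = 1" unfolding inv_S_def using assms(2) by (rule someI)
  have "\<exists>!a. (\<forall>i\<ge>n. a i = 0) \<and> x * inv_S b = (\<Sum>i<n. iota (a i) * d ^ i)"
    using prim_d unfolding prim_elem_def d_def by blast
  then have "x * inv_S b = (\<Sum>i<n. iota (a i) * d ^ i)"
    unfolding a_def coords_def by (rule theI'[THEN conjunct2])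
  have "x = x * inv_S b * b"
    using \<open>b * inv_S b = 1\<close> by (metis mult.assoc mult.commute mult_1_right)
  also have "\<dots> = lincomb (\<lambda>i. d ^ i * b) a"
    unfolding \<open>x * inv_S b = _\<close> lincomb_def by (simp add: sum_distrib_right mult.assoc)
  finally have "cramer_det x b = a (n - 1) * basis_det b"
    unfolding cramer_det_def basis_det_def d_def powers_mult_eq_scaled_powers
    using \<open>n > 0\<close> by (simp add: det_coord_mat_replace_lincomb)
  then show ?thesis unfolding bracket_def a_def d_def by simp
qed

lemma W_eq_nonvanishing:
  assumes "n > 0"
  shows "{b \<in> {b. b dvd 1 \<and> prim_elem iota n (c * b ^ 2)}. bracket iota n (x * inv_S b) (c * b ^ 2) \<noteq> 0}
    = {b. b dvd 1 \<and> basis_det b * cramer_det x b \<noteq> 0}" (is "?lhs = ?rhs")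
proof -
  have "b \<in> ?lhs \<longleftrightarrow> b \<in> ?rhs" for b
  proof (cases "b dvd 1")
    case True
    then obtain b' where b': "b * b' = 1" by (metis dvdE)
    show ?thesis
      using True prim_elem_iff_basis_det[OF b'] bracket_mult_basis_det[OF assms b', of x] by auto
  qed simp
  then show ?thesis by blast
qed

lemma units_open_nonvanishing: "units_open iota n c {b. b dvd 1 \<and> basis_det b * cramer_det x b \<noteq> 0}"
proof -
  note R = fun_algebra_coord_polys
  have powers: "coords_in coord_polys (\<lambda>b. scaled_powers b i)" for i
    unfolding scaled_powers_def
    by (intro coords_in_mult[OF R] coords_in_const[OF R] coords_in_power[OF R] coords_in_coord_polys_id)
  moreover have "coords_in coord_polys (\<lambda>b. ((scaled_powers b)(n - 1 := x)) i)" for i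
    using powers[of i] coords_in_const[OF R, of x] by (cases "i = n - 1") auto
  ultimately have "(\<lambda>b. basis_det b * cramer_det x b) \<in> coord_polys"
    unfolding basis_det_def cramer_det_def
    by (intro fun_algebra_mult[OF R] det_coord_mat_in[OF R])
  then have "zariski_open iota n c {b. basis_det b * cramer_det x b \<noteq> 0}"
    by (rule zariski_open_nonvanishing)
  then show ?thesis unfolding units_open_def by blast
qed

lemma scaled_powers_one: "scaled_powers 1 = (\<lambda>i. c ^ i)"
  unfolding scaled_powers_def by simp

lemma det_coord_mat_powers_c_replace:
  assumes "k < n"
  shows "det (coord_mat ((\<lambda>i. c ^ i)(k := y))) = coord y k"
  using det_coord_mat_replace_lincomb[OF assms, of "\<lambda>i. c ^ i" "coord y"]
  by (simp add: lincomb_powers_coord coord_mat_powers_c)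

lemma basis_det_one: "basis_det 1 = 1"
  unfolding basis_det_def scaled_powers_one coord_mat_powers_c by simp

lemma cramer_det_one: "n > 0 \<Longrightarrow> cramer_det x 1 = coord x (n - 1)"
  unfolding cramer_det_def scaled_powers_one by (simp add: det_coord_mat_powers_c_replace)

lemma obtain_top_coord:
  assumes "x \<noteq> 0"
  obtains m where "m < n" "coord x m \<noteq> 0" "\<And>i. coord x i \<noteq> 0 \<Longrightarrow> i \<le> m"
proof -
  define I where "I = {i. coord x i \<noteq> 0}"
  have "I \<subseteq> {..<n}" unfolding I_def using coord_eq_0 not_less by blast
  then have "finite I" by (rule finite_subset) simp
  moreover have "I \<noteq> {}"
    using assms coord_inj[of x 0] unfolding I_def coord_zero by auto
  ultimately have "Max I \<in> I" and "\<And>i. i \<in> I \<Longrightarrow> i \<le> Max I" by simp_all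
  with \<open>I \<subseteq> {..<n}\<close> show ?thesis by (intro that) (auto simp: I_def)
qed

text \<open>On the line b = 1 + s z, if coord x (n - 1) = 0, replacing that coordinate by s expresses
  x in the family scaled_powers b with its last member replaced by line_col x z s, because s divides
  (1 + s z)^(2i+1) - 1.\<close>

definition line_col :: "'b \<Rightarrow> 'b \<Rightarrow> 'a \<Rightarrow> 'b" where
  "line_col x z s = - (\<Sum>i<n. iota (coord x i) * c ^ i * binom_tail (iota s) z (2 * i))"

lemma cramer_det_on_line:
  assumes "n > 0" and "coord x (n - 1) = 0"
  shows "cramer_det x (1 + iota s * z)
    = s * det (coord_mat ((scaled_powers (1 + iota s * z))(n - 1 := line_col x z s)))"
proof -
  obtain k where k: "n = Suc k" using assms(1) by (cases n) auto
  define sp where "sp = scaled_powers (1 + iota s * z)"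
  define w where "w = sp(k := line_col x z s)"
  have sp: "sp i = c ^ i + iota s * (c ^ i * binom_tail (iota s) z (2 * i))" for i
    unfolding sp_def scaled_powers_def using one_plus_mult_power_eq[of "iota s" z "2 * i"]
    by (simp add: algebra_simps)
  have split_last: "(\<Sum>i<n. f i) = (\<Sum>i<k. f i) + f k" for f :: "nat \<Rightarrow> 'b"
    using k by simp
  have "(\<Sum>i<n. iota (coord x i) * sp i) = x - iota s * line_col x z s"
    unfolding sp line_col_def
    by (subst (2) coord_expand) (simp add: algebra_simps sum.distrib sum_distrib_left)
  moreover have "(\<Sum>i<n. iota (coord x i) * sp i) = (\<Sum>i<k. iota (coord x i) * sp i)"
    using assms(2) k by (simp add: split_last iota_zero)
  moreover have
    "lincomb w ((coord x)(k := s)) = (\<Sum>i<k. iota (coord x i) * sp i) + iota s * line_col x z s"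
  proof -
    have "(\<Sum>i<k. iota (((coord x)(k := s)) i) * w i) = (\<Sum>i<k. iota (coord x i) * sp i)"
      unfolding w_def by (intro sum.cong) auto
    then show ?thesis unfolding lincomb_def split_last by (simp add: w_def)
  qed
  ultimately have "x = lincomb w ((coord x)(k := s))" by (simp add: algebra_simps)
  have "n - 1 = k" "k < n" using k by simp_all
  have "cramer_det x (1 + iota s * z) = det (coord_mat (w(k := lincomb w ((coord x)(k := s)))))"
    unfolding cramer_det_def sp_def[symmetric] \<open>n - 1 = k\<close> w_def
    using \<open>x = lincomb w ((coord x)(k := s))\<close> by (simp add: w_def)
  also have "\<dots> = s * det (coord_mat w)"
    using det_coord_mat_replace_lincomb[OF \<open>k < n\<close>, of w] by simp
  finally show ?thesis unfolding w_def sp_def \<open>n - 1 = k\<close> .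
qed

lemma poly_basis_det_on_line: "(\<lambda>s. basis_det (1 + iota s * z)) \<in> range poly"
  and poly_det_on_line:
    "(\<lambda>s. det (coord_mat ((scaled_powers (1 + iota s * z))(n - 1 := line_col x z s)))) \<in> range poly"
proof -
  note R = fun_algebra_poly
  have powers: "coords_in (range poly) (\<lambda>s. scaled_powers (1 + iota s * z) i)" for i
    unfolding scaled_powers_def
    by (intro coords_in_mult[OF R] coords_in_const[OF R] coords_in_power[OF R] coords_in_add[OF R]
        coords_in_poly_iota)
  then show "(\<lambda>s. basis_det (1 + iota s * z)) \<in> range poly"
    unfolding basis_det_def by (intro det_coord_mat_in[OF R])
  have "coords_in (range poly) (\<lambda>s. line_col x z s)"
    unfolding line_col_def binom_tail_def
    by (intro coords_in_uminus[OF R] coords_in_sum[OF R] coords_in_mult[OF R] coords_in_const[OF R]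
        coords_in_power[OF R] coords_in_poly_iota finite_lessThan finite_atMost)
  with powers have "coords_in (range poly)
      (\<lambda>s. ((scaled_powers (1 + iota s * z))(n - 1 := line_col x z s)) i)" for i
    by (cases "i = n - 1") auto
  then show "(\<lambda>s. det (coord_mat ((scaled_powers (1 + iota s * z))(n - 1 := line_col x z s))))
      \<in> range poly"
    by (intro det_coord_mat_in[OF R])
qed

lemma coord_line_col_zero:
  assumes "m < n" and "\<And>i. coord x i \<noteq> 0 \<Longrightarrow> i \<le> m"
  shows "coord (line_col x (c ^ (n - 1 - m)) 0) (n - 1) = - (of_nat (2 * m + 1) * coord x m)"
proof -
  define y where "y = (\<Sum>i<n. iota (coord x i * of_nat (2 * i + 1)) * c ^ i)"
  have coord_y: "coord y = (\<lambda>i. coord x i * of_nat (2 * i + 1))"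
    unfolding y_def by (rule coord_unique) (simp_all add: coord_eq_0)
  have "line_col x (c ^ (n - 1 - m)) 0 = - (y * c ^ (n - 1 - m))"
    unfolding line_col_def y_def iota_zero binom_tail_zero iota_mult iota_of_nat
    by (simp add: sum_distrib_left mult_ac)
  moreover have "coord (y * c ^ (n - 1 - m)) (n - 1) = coord y m"
    using assms by (intro coord_mult_power_c_top) (auto simp: coord_y)
  ultimately show ?thesis by (simp add: coord_uminus coord_y mult.commute)
qed

end

locale simple_ext_char_0 = simple_ext iota n c
  for iota :: "'a::field_char_0 \<Rightarrow> 'b::comm_ring_1" and n c
begin

lemma obtain_basis_det_cramer_det_nonzero:
  assumes "n > 0" and "x \<noteq> 0"
  obtains b where "basis_det b \<noteq> 0" "cramer_det x b \<noteq> 0"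
proof (cases "coord x (n - 1) = 0")
  case False
  then show ?thesis using that[of 1] basis_det_one cramer_det_one[OF assms(1)] by simp
next
  case True
  obtain m where m: "m < n" "coord x m \<noteq> 0" "\<And>i. coord x i \<noteq> 0 \<Longrightarrow> i \<le> m"
    using obtain_top_coord[OF assms(2)] by blast
  define z where "z = c ^ (n - 1 - m)"
  define r where
    "r s = det (coord_mat ((scaled_powers (1 + iota s * z))(n - 1 := line_col x z s)))" for s
  have "r 0 = coord (line_col x z 0) (n - 1)"
    unfolding r_def iota_zero using assms(1)
    by (simp add: scaled_powers_one det_coord_mat_powers_c_replace)
  also have "\<dots> = - (of_nat (2 * m + 1) * coord x m)"
    unfolding z_def using m(1,3) by (rule coord_line_col_zero)
  finally have "r 0 = - (of_nat (2 * m + 1) * coord x m)" .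
  moreover have "(of_nat (2 * m + 1) :: 'a) \<noteq> 0" by (simp only: of_nat_eq_0_iff)
  ultimately have "r 0 \<noteq> 0" using m(2) by simp
  moreover have "basis_det (1 + iota 0 * z) \<noteq> 0" by (simp add: iota_zero basis_det_one)
  ultimately obtain s where "basis_det (1 + iota s * z) \<noteq> 0" "r s \<noteq> 0" "s \<noteq> 0"
    using poly_funs_common_nonzero[OF infinite_UNIV_char_0 poly_basis_det_on_line poly_det_on_line]
    unfolding r_def by blast
  then show ?thesis
    using that cramer_det_on_line[OF assms(1) True, of s z] unfolding r_def by simp
qed

end

theorem lemma3p7:
  fixes iota :: "'a::field_char_0 \<Rightarrow> 'b::comm_ring_1"
    and n :: nat and c x :: 'b
  assumes "alg_hom iota"
    and "prim_elem iota n c"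
    and "x \<noteq> 0"
  shows "let V = {b. b dvd 1 \<and> prim_elem iota n (c * b ^ 2)};
             W = {b \<in> V. bracket iota n (x * inv_S b) (c * b ^ 2) \<noteq> 0}
         in W \<noteq> {} \<and> units_open iota n c W"
proof -
  interpret simple_ext_char_0 iota n c
    using assms(1,2) by unfold_locales
  have "n > 0" using assms(3) coord_expand[of x] by (cases n) auto
  obtain b where "basis_det b \<noteq> 0" "cramer_det x b \<noteq> 0"
    using obtain_basis_det_cramer_det_nonzero[OF \<open>n > 0\<close> assms(3)] .
  then have "b \<in> {b. b dvd 1 \<and> basis_det b * cramer_det x b \<noteq> 0}"
    using unit_if_basis_det_nonzero by simp
  then show ?thesis
    unfolding Let_def W_eq_nonvanishing[OF \<open>n > 0\<close>] using units_open_nonvanishing by blast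
qed

end
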